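(* Let $\mathbb{X},\mathbb{Y}$ be real Banach spaces of dimension greater than $1$. Then the pair $(\mathbb{X},\mathbb{Y})$ has the strong Bishop-Phelps-Bollobás property (sBPBp) if and only if for every $\epsilon>0$ and every nonzero $T\in\mathbb{L}(\mathbb{X},\mathbb{Y})$ there exists $\delta=\delta(\epsilon,T)$ with $0<\delta<\|T\|$ such that \[M_T(\delta)\subseteq\bigcup_{x\in M_T}\big(B(x,\epsilon)\cap S_{\mathbb{X}}\big).\]
   Context: The pair $(\mathbb{X},\mathbb{Y})$ has sBPBp if for every $\epsilon>0$ and every $T\in\mathbb{L}(\mathbb{X},\mathbb{Y})$ with $\|T\|=1$ there exists $\eta(\epsilon,T)>0$ such that whenever $x_0\in S_{\mathbb{X}}$ satisfies $\|Tx_0\|>1-\eta(\epsilon,T)$, there exists $x_1\in S_{\mathbb{X}}$ with $\|Tx_1\|=1$ and $\|x_1-x_0\|<\epsilon$. Here $M_T=\{x\in S_{\mathbb{X}}:\|Tx\|=\|T\|\}$, and for nonzero $T$ and $0<\delta<\|T\|$, $M_T(\delta)=\{x\in S_{\mathbb{X}}:\|Tx\|>\|T\|-\delta\}$; $B(x,r)$ is the open ball of centre $x$ and radius $r$. *)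

theory Defs
  imports "HOL-Analysis.Analysis"
begin

definition dim_gt_one :: "'a::real_vector itself \<Rightarrow> bool" where
  "dim_gt_one _ \<longleftrightarrow> (\<exists>x y :: 'a. x \<noteq> y \<and> independent {x, y})"

definition sBPBp :: "'a::real_normed_vector itself \<Rightarrow> 'b::real_normed_vector itself \<Rightarrow> bool" where
  "sBPBp _ _ \<longleftrightarrow>
     (\<forall>\<epsilon>>0. \<forall>T :: ('a, 'b) blinfun. norm T = 1 \<longrightarrow>
        (\<exists>\<eta>>0. \<forall>x0 \<in> sphere (0::'a) 1. norm (blinfun_apply T x0) > 1 - \<eta> \<longrightarrow>
            (\<exists>x1 \<in> sphere (0::'a) 1. norm (blinfun_apply T x1) = 1 \<and> norm (x1 - x0) < \<epsilon>)))"

definition M_T :: "('a::real_normed_vector, 'b::real_normed_vector) blinfun \<Rightarrow> 'a set" where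
  "M_T T = {x \<in> sphere 0 1. norm (blinfun_apply T x) = norm T}"

definition M_T_delta :: "('a::real_normed_vector, 'b::real_normed_vector) blinfun \<Rightarrow> real \<Rightarrow> 'a set" where
  "M_T_delta T \<delta> = {x \<in> sphere 0 1. norm (blinfun_apply T x) > norm T - \<delta>}"

end

theory Submission
  imports Defs
begin

(* Both conditions say that near-norming points of the unit sphere lie close to norming points.
   sBPBp asks this for operators of norm one, the covering condition for all nonzero operators,
   and the two are matched by normalising T to T / norm T, which leaves M_T unchanged and
   rescales the threshold of M_T_delta by norm T. *)

lemma M_T_delta_subset_sphere: "M_T_delta T \<delta> \<subseteq> sphere 0 1"
  by (auto simp: M_T_delta_def)

lemma M_T_delta_mono: "\<delta> \<le> \<delta>' \<Longrightarrow> M_T_delta T \<delta> \<subseteq> M_T_delta T \<delta>'"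
  by (auto simp: M_T_delta_def)

lemma M_T_scaleR:
  assumes "c > 0"
  shows "M_T (c *\<^sub>R T) = M_T T"
  using assms by (simp add: M_T_def blinfun.scaleR_left)

lemma M_T_delta_scaleR:
  assumes "c > 0"
  shows "M_T_delta (c *\<^sub>R T) (c * \<delta>) = M_T_delta T \<delta>"
proof -
  have "c * norm (T x) > c * norm T - c * \<delta> \<longleftrightarrow> norm (T x) > norm T - \<delta>" for x
    using assms by (simp flip: right_diff_distrib)
  then show ?thesis
    using assms by (simp add: M_T_delta_def blinfun.scaleR_left)
qed

lemma M_T_delta_subset_cover_iff:
  "M_T_delta T \<delta> \<subseteq> (\<Union>x \<in> M_T T. ball x \<epsilon> \<inter> sphere 0 1) \<longleftrightarrow>
   (\<forall>x0 \<in> M_T_delta T \<delta>. \<exists>x1 \<in> M_T T. norm (x1 - x0) < \<epsilon>)"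
  using M_T_delta_subset_sphere[of T \<delta>] by (fastforce simp: dist_norm)

lemma sBPBp_iff_M_T_delta:
  "sBPBp TYPE('a::real_normed_vector) TYPE('b::real_normed_vector) \<longleftrightarrow>
   (\<forall>\<epsilon>>0. \<forall>T :: ('a, 'b) blinfun. norm T = 1 \<longrightarrow>
      (\<exists>\<eta>>0. \<forall>x0 \<in> M_T_delta T \<eta>. \<exists>x1 \<in> M_T T. norm (x1 - x0) < \<epsilon>))"
  unfolding sBPBp_def M_T_def M_T_delta_def by (simp add: Ball_def Bex_def imp_conjL conj_ac)

lemma M_T_delta_approx_normalize:
  fixes T :: "('a::real_normed_vector, 'b::real_normed_vector) blinfun"
  assumes "T \<noteq> 0"
    and approx: "\<forall>x0 \<in> M_T_delta (T /\<^sub>R norm T) \<eta>. \<exists>x1 \<in> M_T (T /\<^sub>R norm T). norm (x1 - x0) < \<epsilon>"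
  shows "\<forall>x0 \<in> M_T_delta T (norm T * \<eta>). \<exists>x1 \<in> M_T T. norm (x1 - x0) < \<epsilon>"
proof -
  have c: "norm T > 0" using assms(1) by simp
  have "T = norm T *\<^sub>R (T /\<^sub>R norm T)" using c by simp
  then have "M_T_delta T (norm T * \<eta>) = M_T_delta (T /\<^sub>R norm T) \<eta>"
    and "M_T T = M_T (T /\<^sub>R norm T)"
    using M_T_delta_scaleR[OF c] M_T_scaleR[OF c] by metis+
  with approx show ?thesis by simp
qed

theorem theorem2p4:
  assumes "dim_gt_one TYPE('a::banach)"
      and "dim_gt_one TYPE('b::banach)"
  shows "sBPBp TYPE('a) TYPE('b) \<longleftrightarrow>
    (\<forall>\<epsilon>>0. \<forall>T :: ('a, 'b) blinfun. T \<noteq> 0 \<longrightarrow>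
       (\<exists>\<delta>. 0 < \<delta> \<and> \<delta> < norm T \<and>
          M_T_delta T \<delta> \<subseteq> (\<Union>x \<in> M_T T. ball x \<epsilon> \<inter> sphere 0 1)))"
  unfolding sBPBp_iff_M_T_delta M_T_delta_subset_cover_iff
proof (intro iffI allI impI)
  fix \<epsilon> :: real and T :: "('a, 'b) blinfun"
  assume sBPBp: "\<forall>\<epsilon>>0. \<forall>T :: ('a, 'b) blinfun. norm T = 1 \<longrightarrow>
      (\<exists>\<eta>>0. \<forall>x0 \<in> M_T_delta T \<eta>. \<exists>x1 \<in> M_T T. norm (x1 - x0) < \<epsilon>)"
    and "\<epsilon> > 0" and T: "T \<noteq> 0"
  moreover have "norm (T /\<^sub>R norm T) = 1"
    using T by simp
  ultimately obtain \<eta> where "\<eta> > 0"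
    and "\<forall>x0 \<in> M_T_delta (T /\<^sub>R norm T) \<eta>. \<exists>x1 \<in> M_T (T /\<^sub>R norm T). norm (x1 - x0) < \<epsilon>"
    by blast
  then have approx: "\<forall>x0 \<in> M_T_delta T (norm T * \<eta>). \<exists>x1 \<in> M_T T. norm (x1 - x0) < \<epsilon>"
    using M_T_delta_approx_normalize T by blast
  define \<delta> where "\<delta> = norm T * min \<eta> (1/2)"
  have "M_T_delta T \<delta> \<subseteq> M_T_delta T (norm T * \<eta>)"
    using T by (intro M_T_delta_mono) (simp add: \<delta>_def)
  moreover have "0 < \<delta>" "\<delta> < norm T"
    using T \<open>\<eta> > 0\<close> by (simp_all add: \<delta>_def)
  ultimately show "\<exists>\<delta>>0. \<delta> < norm T \<and> (\<forall>x0 \<in> M_T_delta T \<delta>. \<exists>x1 \<in> M_T T. norm (x1 - x0) < \<epsilon>)"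
    using approx by blast
next
  fix \<epsilon> :: real and T :: "('a, 'b) blinfun"
  assume "\<forall>\<epsilon>>0. \<forall>T :: ('a, 'b) blinfun. T \<noteq> 0 \<longrightarrow>
      (\<exists>\<delta>>0. \<delta> < norm T \<and> (\<forall>x0 \<in> M_T_delta T \<delta>. \<exists>x1 \<in> M_T T. norm (x1 - x0) < \<epsilon>))"
    and "\<epsilon> > 0" and "norm T = 1"
  then show "\<exists>\<eta>>0. \<forall>x0 \<in> M_T_delta T \<eta>. \<exists>x1 \<in> M_T T. norm (x1 - x0) < \<epsilon>"
    by force
qed

end
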